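(* Let $\Psi$ be an essentially single-valued, rent monotone, Pareto indifferent selection from the envy-free set. Let $u\in\mathcal{B}^N$, $m\in\mathbb{R}$, $(r,\sigma)\in\Psi(N,A,u,m)$, and let $\mu$ be a minimum weight perfect matching in $\mathcal{F}^u_\kappa(r)$. Then there is $\varepsilon>0$ such that for each $\delta\in[0,\varepsilon]$ there is $(r^\delta,\mu)\in\Psi(N,A,u,m+\delta)$.
   Context: Fix a finite set $\{\rho_1,\dots,\rho_k\}\subseteq\mathbb{R}_+$ with $\rho_1=0$. $N=\{1,\dots,n\}$ agents, $A$ a set of $n$ rooms. $\mathcal{B}$ is the set of utility functions $u_i(r_a,a)=v^i_a-r_a-\rho_i\max\{0,r_a-b_i\}$ with $v^i\in\mathbb{R}^A$, $b_i\ge0$, $\rho_i\in\{\rho_1,\dots,\rho_k\}$. An allocation for $(N,A,u,m)$ is $(r,\sigma)$ with $\sigma:N\to A$ a bijection, $r\in\mathbb{R}^A$, $\sum_ar_a=m$; envy-free means $u_i(r_{\sigma(i)},\sigma(i))\ge u_i(r_{\sigma(j)},\sigma(j))$ for all $i,j$; $F(N,A,u,m)$ is the set of envy-free allocations. A selection $\Psi$ assigns to each economy $(N,A,u,m)$ a subset $\Psi(N,A,u,m)\subseteq F(N,A,u,m)$. It is essentially single-valued if each agent is indifferent between any two allocations in $\Psi(N,A,u,m)$; rent monotone if (being essentially single-valued) for each $i$ the utility $u_i(r_{\sigma(i)},\sigma(i))$ at $(r,\sigma)\in\Psi(N,A,u,m)$ is strictly decreasing in $m$; Pareto indifferent if whenever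 $(r,\sigma)\in\Psi(N,A,u,m)$ and $(t,\mu)$ is an allocation with $u_i(t_{\mu(i)},\mu(i))=u_i(r_{\sigma(i)},\sigma(i))$ for all $i$, then $(t,\mu)\in\Psi(N,A,u,m)$. $\kappa_{ia}(u,r)=1+\rho_i$ if $r_a\ge b_i$ and $1$ otherwise (absolute marginal disutility of an increase of rent of room $a$). For $r$ with some envy-free $(r,\sigma)$, $\mathcal{F}(r)$ is the bipartite graph on $N\cup A$ with edge $(i,a)$ iff $u_i(r_{\sigma(i)},\sigma(i))=u_i(r_a,a)$, and $\mathcal{F}^u_\kappa(r)$ has weights $w(i,a)=\log\kappa_{ia}(u,r)$; a minimum weight perfect matching is a bijection $\mu:N\to A$ using only edges of $\mathcal{F}(r)$ minimizing $\sum_iw(i,\mu(i))$ among such. *)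

theory Defs
  imports Complex_Main
begin

text \<open>Agents are the elements of a finite type 'n, rooms the elements of a finite
type 'a (with equally many elements). A utility profile is
u :: 'n => real => 'a => real, where u i x a is agent i's utility for room a at rent x.\<close>

type_synonym ('n,'a) profile = "'n \<Rightarrow> real \<Rightarrow> 'a \<Rightarrow> real"
type_synonym ('n,'a) alloc = "('a \<Rightarrow> real) \<times> ('n \<Rightarrow> 'a)"

definition qlu :: "('n \<Rightarrow> 'a \<Rightarrow> real) \<Rightarrow> ('n \<Rightarrow> real) \<Rightarrow> ('n \<Rightarrow> real) \<Rightarrow> ('n,'a) profile" where
  "qlu v b \<rho> = (\<lambda>i x a. v i a - x - \<rho> i * max 0 (x - b i))"

text \<open>The domain B^N of utility profiles, for the fixed finite set P of penalty rates.\<close>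
definition profiles_B :: "real set \<Rightarrow> ('n,'a) profile set" where
  "profiles_B P = {u. \<exists>v b \<rho>. (\<forall>i. b i \<ge> 0 \<and> \<rho> i \<in> P) \<and> u = qlu v b \<rho>}"

definition is_alloc :: "real \<Rightarrow> ('n,'a) alloc \<Rightarrow> bool" where
  "is_alloc m al \<longleftrightarrow> bij (snd al) \<and> (\<Sum>a\<in>UNIV. fst al a) = m"

definition util :: "('n,'a) profile \<Rightarrow> ('n,'a) alloc \<Rightarrow> 'n \<Rightarrow> real" where
  "util u al i = u i (fst al (snd al i)) (snd al i)"

definition envy_free :: "('n,'a) profile \<Rightarrow> real \<Rightarrow> ('n,'a) alloc \<Rightarrow> bool" where
  "envy_free u m al \<longleftrightarrow> is_alloc m al \<and>
     (\<forall>i j. u i (fst al (snd al i)) (snd al i) \<ge> u i (fst al (snd al j)) (snd al j))"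

definition EF :: "('n,'a) profile \<Rightarrow> real \<Rightarrow> ('n,'a) alloc set" where
  "EF u m = {al. envy_free u m al}"

definition selection :: "real set \<Rightarrow> (('n::finite,'a::finite) profile \<Rightarrow> real \<Rightarrow> ('n,'a) alloc set) \<Rightarrow> bool" where
  "selection P \<Psi> \<longleftrightarrow> (\<forall>u\<in>profiles_B P. \<forall>m. \<Psi> u m \<subseteq> EF u m \<and> \<Psi> u m \<noteq> {})"

definition ess_single_valued :: "real set \<Rightarrow> (('n,'a) profile \<Rightarrow> real \<Rightarrow> ('n,'a) alloc set) \<Rightarrow> bool" where
  "ess_single_valued P \<Psi> \<longleftrightarrow> (\<forall>u\<in>profiles_B P. \<forall>m. \<forall>al\<in>\<Psi> u m. \<forall>al'\<in>\<Psi> u m.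
      \<forall>i. util u al i = util u al' i)"

definition rent_monotone :: "real set \<Rightarrow> (('n,'a) profile \<Rightarrow> real \<Rightarrow> ('n,'a) alloc set) \<Rightarrow> bool" where
  "rent_monotone P \<Psi> \<longleftrightarrow> ess_single_valued P \<Psi> \<and>
     (\<forall>u\<in>profiles_B P. \<forall>m m'. m < m' \<longrightarrow> (\<forall>al\<in>\<Psi> u m. \<forall>al'\<in>\<Psi> u m'.
        \<forall>i. util u al' i < util u al i))"

definition pareto_indifferent :: "real set \<Rightarrow> (('n,'a) profile \<Rightarrow> real \<Rightarrow> ('n,'a) alloc set) \<Rightarrow> bool" where
  "pareto_indifferent P \<Psi> \<longleftrightarrow> (\<forall>u\<in>profiles_B P. \<forall>m. \<forall>al\<in>\<Psi> u m. \<forall>al'.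
      is_alloc m al' \<and> (\<forall>i. util u al' i = util u al i) \<longrightarrow> al' \<in> \<Psi> u m)"

definition kappa :: "('n \<Rightarrow> real) \<Rightarrow> ('n \<Rightarrow> real) \<Rightarrow> ('a \<Rightarrow> real) \<Rightarrow> 'n \<Rightarrow> 'a \<Rightarrow> real" where
  "kappa b \<rho> r i a = (if r a \<ge> b i then 1 + \<rho> i else 1)"

text \<open>Edges of the graph F(r), defined from an envy-free allocation (r, sigma).\<close>
definition F_edge :: "('n,'a) profile \<Rightarrow> ('a \<Rightarrow> real) \<Rightarrow> ('n \<Rightarrow> 'a) \<Rightarrow> 'n \<Rightarrow> 'a \<Rightarrow> bool" where
  "F_edge u r \<sigma> i a \<longleftrightarrow> u i (r (\<sigma> i)) (\<sigma> i) = u i (r a) a"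

definition perfect_matching_F :: "('n,'a) profile \<Rightarrow> ('a \<Rightarrow> real) \<Rightarrow> ('n \<Rightarrow> 'a) \<Rightarrow> ('n \<Rightarrow> 'a) \<Rightarrow> bool" where
  "perfect_matching_F u r \<sigma> \<mu> \<longleftrightarrow> bij \<mu> \<and> (\<forall>i. F_edge u r \<sigma> i (\<mu> i))"

definition min_weight_pm :: "('n \<Rightarrow> 'a \<Rightarrow> real) \<Rightarrow> ('n \<Rightarrow> real) \<Rightarrow> ('n \<Rightarrow> real) \<Rightarrow> ('a \<Rightarrow> real)
     \<Rightarrow> ('n::finite \<Rightarrow> 'a) \<Rightarrow> ('n \<Rightarrow> 'a) \<Rightarrow> bool" where
  "min_weight_pm v b \<rho> r \<sigma> \<mu> \<longleftrightarrow> perfect_matching_F (qlu v b \<rho>) r \<sigma> \<mu> \<and>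
     (\<forall>\<mu>'. perfect_matching_F (qlu v b \<rho>) r \<sigma> \<mu>' \<longrightarrow>
        (\<Sum>i\<in>UNIV. ln (kappa b \<rho> r i (\<mu> i))) \<le> (\<Sum>i\<in>UNIV. ln (kappa b \<rho> r i (\<mu>' i))))"

end

theory Submission
  imports Defs
begin

text \<open>Raise the total rent by a small \<delta> > 0 and let (s, \<tau>) be selected there. By rent
monotonicity every agent is worse off, so every rent rises, by amounts d a > 0 summing to \<delta>.
If \<delta> is below the distance of every rent to the kinks b i, and (1 + \<rho> i) \<delta> is below every
utility gap of a non-edge of F(r), then u i (s a) a = u i (r a) a - \<kappa> i a * d a and \<tau> is a
perfect matching of F(r). Envy-freeness at s gives \<kappa> i (\<tau> i) * d (\<tau> i) \<le> \<kappa> i (\<mu> i) * d (\<mu> i);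
summing logarithms, the d-terms cancel, and minimality of \<mu> gives the reverse inequality of the
sums. So every agent is indifferent between \<tau> i and \<mu> i at s, and Pareto indifference
selects (s, \<mu>).\<close>

lemma qlu_antimono:
  assumes "\<rho> i \<ge> 0" "x \<le> y"
  shows "qlu v b \<rho> i y a \<le> qlu v b \<rho> i x a"
proof -
  have "\<rho> i * max 0 (x - b i) \<le> \<rho> i * max 0 (y - b i)"
    using assms by (intro mult_left_mono) auto
  then show ?thesis using assms by (simp add: qlu_def)
qed

lemma qlu_add_rent:
  assumes "0 \<le> d" "r a < b i \<Longrightarrow> r a + d \<le> b i"
  shows "qlu v b \<rho> i (r a + d) a = qlu v b \<rho> i (r a) a - kappa b \<rho> r i a * d"
proof (cases "b i \<le> r a")
  case True
  then show ?thesis using assms by (simp add: qlu_def kappa_def max_def algebra_simps)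
next
  case False
  then show ?thesis using assms by (simp add: qlu_def kappa_def max_def algebra_simps)
qed

lemma qlu_in_profiles_B:
  assumes "\<forall>i. b i \<ge> 0" "\<forall>i. \<rho> i \<in> P"
  shows "qlu v b \<rho> \<in> profiles_B P"
  using assms unfolding profiles_B_def by blast

lemma envy_free_allocD:
  assumes "envy_free u m (r, \<sigma>)"
  shows "bij \<sigma>" "sum r UNIV = m"
  using assms by (simp_all add: envy_free_def is_alloc_def)

lemma envy_free_room_le:
  assumes "envy_free u m (r, \<sigma>)"
  shows "u i (r a) a \<le> u i (r (\<sigma> i)) (\<sigma> i)"
proof -
  obtain j where "a = \<sigma> j" using envy_free_allocD(1)[OF assms] by (meson bij_is_surj surjD)
  with assms show ?thesis by (simp add: envy_free_def)
qed

lemma envy_free_worse_off_imp_rents_rise: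
  assumes antimono: "\<And>i a x y. x \<le> y \<Longrightarrow> u i y a \<le> u i x a"
    and ef_r: "envy_free u m (r, \<sigma>)" and ef_s: "envy_free u m' (s, \<tau>)"
    and worse: "\<And>i. util u (s, \<tau>) i < util u (r, \<sigma>) i"
  shows "r a < s a"
proof (rule ccontr)
  assume "\<not> r a < s a"
  obtain i where a: "a = \<sigma> i" using envy_free_allocD(1)[OF ef_r] by (meson bij_is_surj surjD)
  have "u i (r a) a \<le> u i (s a) a" using antimono \<open>\<not> r a < s a\<close> by simp
  also have "\<dots> \<le> u i (s (\<tau> i)) (\<tau> i)" using envy_free_room_le[OF ef_s] .
  finally show False using worse[of i] a by (simp add: util_def)
qed

lemma envy_free_matching_of_F:
  assumes ef_s: "envy_free u m' (s, \<tau>)"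
    and loss: "\<And>i a. u i (s a) a < u i (r a) a"
    and non_edge: "\<And>i a. \<not> F_edge u r \<sigma> i a \<Longrightarrow> u i (r a) a \<le> u i (s (\<sigma> i)) (\<sigma> i)"
  shows "perfect_matching_F u r \<sigma> \<tau>"
proof -
  have "F_edge u r \<sigma> i (\<tau> i)" for i
  proof (rule ccontr)
    assume "\<not> F_edge u r \<sigma> i (\<tau> i)"
    then have "u i (s (\<tau> i)) (\<tau> i) < u i (s (\<sigma> i)) (\<sigma> i)"
      using loss[of i "\<tau> i"] non_edge by fastforce
    then show False using envy_free_room_le[OF ef_s] by (meson not_le)
  qed
  then show ?thesis using envy_free_allocD(1)[OF ef_s] by (simp add: perfect_matching_F_def)
qed

lemma sum_ln_matching_tight:
  fixes w :: "'n::finite \<Rightarrow> 'a \<Rightarrow> real" and d :: "'a \<Rightarrow> real"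
  assumes "bij \<tau>" "bij \<mu>" and w_pos: "\<And>i a. w i a > 0" and d_pos: "\<And>a. d a > 0"
    and termwise: "\<And>i. w i (\<tau> i) * d (\<tau> i) \<le> w i (\<mu> i) * d (\<mu> i)"
    and sum_le: "(\<Sum>i\<in>UNIV. ln (w i (\<mu> i))) \<le> (\<Sum>i\<in>UNIV. ln (w i (\<tau> i)))"
  shows "w i (\<tau> i) * d (\<tau> i) = w i (\<mu> i) * d (\<mu> i)"
proof -
  define L where "L \<pi> j = ln (w j (\<pi> j) * d (\<pi> j))" for \<pi> :: "'n \<Rightarrow> 'a" and j
  have L_split: "L \<pi> j = ln (w j (\<pi> j)) + ln (d (\<pi> j))" for \<pi> j
    unfolding L_def using w_pos d_pos by (simp add: ln_mult_pos)
  have "(\<Sum>j\<in>UNIV. ln (d (\<pi> j))) = (\<Sum>a\<in>UNIV. ln (d a))" if "bij \<pi>" for \<pi> :: "'n \<Rightarrow> 'a"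
    using sum.reindex_bij_betw[OF that] by simp
  then have sum_L: "sum (L \<mu>) UNIV \<le> sum (L \<tau>) UNIV"
    using sum_le assms(1,2) by (simp add: L_split sum.distrib)
  have L_le: "L \<tau> j \<le> L \<mu> j" for j
    unfolding L_def using termwise w_pos d_pos by simp
  have "L \<tau> i = L \<mu> i"
  proof (rule ccontr)
    assume "L \<tau> i \<noteq> L \<mu> i"
    with L_le have "sum (L \<tau>) UNIV < sum (L \<mu>) UNIV"
      by (intro sum_strict_mono_ex1) (auto simp: order.strict_iff_order)
    with sum_L show False by simp
  qed
  then show ?thesis unfolding L_def using w_pos d_pos by simp
qed

lemma min_weight_pm_matching:
  assumes "min_weight_pm v b \<rho> r \<sigma> \<mu>"
  shows "bij \<mu>" "qlu v b \<rho> i (r (\<mu> i)) (\<mu> i) = qlu v b \<rho> i (r (\<sigma> i)) (\<sigma> i)"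
  using assms by (simp_all add: min_weight_pm_def perfect_matching_F_def F_edge_def)

lemma selection_envy_free:
  assumes "selection P \<Psi>" "u \<in> profiles_B P" "al \<in> \<Psi> u m"
  shows "envy_free u m al"
  using assms unfolding selection_def EF_def by blast

lemma pareto_indifferent_rematch:
  assumes "selection P \<Psi>" "pareto_indifferent P \<Psi>" "u \<in> profiles_B P" "(r, \<sigma>) \<in> \<Psi> u m"
    and "bij \<mu>" "\<And>i. u i (r (\<mu> i)) (\<mu> i) = u i (r (\<sigma> i)) (\<sigma> i)"
  shows "(r, \<mu>) \<in> \<Psi> u m"
proof -
  have "sum r UNIV = m" using assms(1,3,4) by (blast dest: selection_envy_free envy_free_allocD(2))
  with assms(2-) show ?thesis unfolding pareto_indifferent_def by (auto simp: is_alloc_def util_def)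
qed

lemma ex_rent_margin:
  fixes u :: "('n::finite, 'a::finite) profile" and U b \<rho> :: "'n \<Rightarrow> real" and r :: "'a \<Rightarrow> real"
  assumes "\<And>i. \<rho> i \<ge> 0"
  obtains \<epsilon> where "\<epsilon> > 0" "\<And>i a. r a < b i \<Longrightarrow> r a + \<epsilon> \<le> b i"
    "\<And>i a. u i (r a) a < U i \<Longrightarrow> (1 + \<rho> i) * \<epsilon> \<le> U i - u i (r a) a"
proof -
  define c where "c = (\<lambda>(i, a). min (if u i (r a) a < U i then (U i - u i (r a) a) / (1 + \<rho> i) else 1)
                                    (if r a < b i then b i - r a else 1))"
  define \<epsilon> where "\<epsilon> = Min (range c)"
  have pos: "1 + \<rho> i > 0" for i using assms[of i] by simp
  have \<epsilon>_le: "\<epsilon> \<le> c (i, a)" for i a unfolding \<epsilon>_def by simp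
  have "\<epsilon> > 0" unfolding \<epsilon>_def c_def using pos by (subst Min_gr_iff) auto
  moreover have "r a + \<epsilon> \<le> b i" if "r a < b i" for i a using \<epsilon>_le[of i a] that by (simp add: c_def)
  moreover have "(1 + \<rho> i) * \<epsilon> \<le> U i - u i (r a) a" if "u i (r a) a < U i" for i a
  proof -
    have "\<epsilon> \<le> (U i - u i (r a) a) / (1 + \<rho> i)" using \<epsilon>_le[of i a] that by (simp add: c_def)
    with pos[of i] show ?thesis by (simp add: pos_le_divide_eq mult.commute)
  qed
  ultimately show ?thesis using that by blast
qed

lemma qlu_small_increase_linear:
  fixes v :: "'n::finite \<Rightarrow> 'a::finite \<Rightarrow> real" and b \<rho> :: "'n \<Rightarrow> real"
  assumes u_def: "u = qlu v b \<rho>" and \<rho>_nonneg: "\<And>i. \<rho> i \<ge> 0"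
    and ef_r: "envy_free u m (r, \<sigma>)" and ef_s: "envy_free u (m + \<delta>) (s, \<tau>)"
    and worse: "\<And>i. util u (s, \<tau>) i < util u (r, \<sigma>) i"
    and margin: "\<And>i a. r a < b i \<Longrightarrow> r a + \<epsilon> \<le> b i" and "\<delta> \<le> \<epsilon>"
  shows "0 < s a - r a" "s a - r a \<le> \<epsilon>"
    "u i (s a) a = u i (r a) a - kappa b \<rho> r i a * (s a - r a)"
proof -
  define d where "d a = s a - r a" for a
  have "u i y a \<le> u i x a" if "x \<le> y" for i a x y
    using qlu_antimono[where \<rho> = \<rho> and i = i, OF \<rho>_nonneg[of i] that] unfolding u_def .
  then have d_pos: "d a > 0" for a
    using envy_free_worse_off_imp_rents_rise[OF _ ef_r ef_s worse] unfolding d_def by simp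
  have "sum d UNIV = \<delta>"
    using envy_free_allocD(2)[OF ef_r] envy_free_allocD(2)[OF ef_s] by (simp add: d_def sum_subtractf)
  then have d_le: "d a \<le> \<epsilon>" for a
    using member_le_sum[of a UNIV d] d_pos \<open>\<delta> \<le> \<epsilon>\<close> by (simp add: less_imp_le)
  have "r a < b i \<Longrightarrow> r a + d a \<le> b i" using d_le[of a] margin[of a i] by linarith
  with d_pos[of a] have "u i (s a) a = u i (r a) a - kappa b \<rho> r i a * d a"
    using qlu_add_rent[of "d a" r a b i v \<rho>] unfolding u_def by (simp add: d_def)
  with d_pos d_le show "0 < s a - r a" "s a - r a \<le> \<epsilon>"
    "u i (s a) a = u i (r a) a - kappa b \<rho> r i a * (s a - r a)"
    by (simp_all add: d_def)
qed

lemma qlu_small_increase_indifferent: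
  fixes v :: "'n::finite \<Rightarrow> 'a::finite \<Rightarrow> real" and b \<rho> :: "'n \<Rightarrow> real"
  assumes u_def: "u = qlu v b \<rho>" and \<rho>_nonneg: "\<And>i. \<rho> i \<ge> 0"
    and ef_r: "envy_free u m (r, \<sigma>)" and ef_s: "envy_free u (m + \<delta>) (s, \<tau>)"
    and worse: "\<And>i. util u (s, \<tau>) i < util u (r, \<sigma>) i"
    and mwpm: "min_weight_pm v b \<rho> r \<sigma> \<mu>"
    and margin: "\<And>i a. r a < b i \<Longrightarrow> r a + \<epsilon> \<le> b i"
      "\<And>i a. u i (r a) a < u i (r (\<sigma> i)) (\<sigma> i) \<Longrightarrow>
        (1 + \<rho> i) * \<epsilon> \<le> u i (r (\<sigma> i)) (\<sigma> i) - u i (r a) a"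
    and "\<delta> \<le> \<epsilon>"
  shows "u i (s (\<mu> i)) (\<mu> i) = u i (s (\<tau> i)) (\<tau> i)"
proof -
  define d where "d a = s a - r a" for a
  define K where "K = kappa b \<rho> r"
  note increase = qlu_small_increase_linear[OF u_def \<rho>_nonneg ef_r ef_s worse margin(1) \<open>\<delta> \<le> \<epsilon>\<close>]
  have d_pos: "d a > 0" and d_le: "d a \<le> \<epsilon>" and linear: "u i (s a) a = u i (r a) a - K i a * d a"
    for i a using increase unfolding d_def K_def by simp_all
  have K_ge: "1 \<le> K i a" and K_le: "K i a \<le> 1 + \<rho> i" for i a
    using \<rho>_nonneg[of i] by (simp_all add: K_def kappa_def)
  have loss: "u i (s a) a < u i (r a) a" for i a
    using linear[of i a] K_ge[of i a] d_pos[of a] by (simp add: less_le_trans)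
  have "u i (r a) a \<le> u i (s (\<sigma> i)) (\<sigma> i)" if "\<not> F_edge u r \<sigma> i a" for i a
  proof -
    have gap: "u i (r a) a < u i (r (\<sigma> i)) (\<sigma> i)"
      using that envy_free_room_le[OF ef_r, of i a] by (simp add: F_edge_def)
    have "K i (\<sigma> i) * d (\<sigma> i) \<le> (1 + \<rho> i) * \<epsilon>"
      using mult_mono[OF K_le d_le] \<rho>_nonneg[of i] d_pos[of "\<sigma> i"] by simp
    with margin(2)[OF gap] linear show ?thesis by simp
  qed
  with ef_s loss have pm_\<tau>: "perfect_matching_F u r \<sigma> \<tau>" by (rule envy_free_matching_of_F)
  then have edge_\<tau>: "u i (r (\<tau> i)) (\<tau> i) = u i (r (\<sigma> i)) (\<sigma> i)" and "bij \<tau>" for i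
    by (simp_all add: perfect_matching_F_def F_edge_def)
  have min_\<mu>: "(\<Sum>i\<in>UNIV. ln (K i (\<mu> i))) \<le> (\<Sum>i\<in>UNIV. ln (K i (\<tau> i)))"
    using mwpm pm_\<tau> unfolding min_weight_pm_def u_def K_def by blast
  from mwpm have edge_\<mu>: "u i (r (\<mu> i)) (\<mu> i) = u i (r (\<sigma> i)) (\<sigma> i)" and "bij \<mu>" for i
    unfolding u_def by (simp_all add: min_weight_pm_matching)
  have "K i (\<tau> i) * d (\<tau> i) \<le> K i (\<mu> i) * d (\<mu> i)" for i
    using envy_free_room_le[OF ef_s, of i "\<mu> i"] linear edge_\<tau> edge_\<mu> by simp
  then have "K i (\<tau> i) * d (\<tau> i) = K i (\<mu> i) * d (\<mu> i)"
    using sum_ln_matching_tight[OF \<open>bij \<tau>\<close> \<open>bij \<mu>\<close> _ d_pos _ min_\<mu>] K_ge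
    by (meson less_le_trans zero_less_one)
  then show ?thesis using linear edge_\<tau> edge_\<mu> by simp
qed

lemma selection_small_increase_rematch:
  fixes v :: "'n::finite \<Rightarrow> 'a::finite \<Rightarrow> real" and b \<rho> :: "'n \<Rightarrow> real"
  assumes sel: "selection P \<Psi>" and rm: "rent_monotone P \<Psi>" and pi: "pareto_indifferent P \<Psi>"
    and u_def: "u = qlu v b \<rho>" and u_B: "u \<in> profiles_B P" and \<rho>_nonneg: "\<And>i. \<rho> i \<ge> 0"
    and in_sel: "(r, \<sigma>) \<in> \<Psi> u m" and mwpm: "min_weight_pm v b \<rho> r \<sigma> \<mu>"
    and margin: "\<And>i a. r a < b i \<Longrightarrow> r a + \<epsilon> \<le> b i"
      "\<And>i a. u i (r a) a < u i (r (\<sigma> i)) (\<sigma> i) \<Longrightarrow>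
        (1 + \<rho> i) * \<epsilon> \<le> u i (r (\<sigma> i)) (\<sigma> i) - u i (r a) a"
    and "0 < \<delta>" "\<delta> \<le> \<epsilon>"
  shows "\<exists>s. (s, \<mu>) \<in> \<Psi> u (m + \<delta>)"
proof -
  obtain s \<tau> where s\<tau>: "(s, \<tau>) \<in> \<Psi> u (m + \<delta>)" using sel u_B unfolding selection_def by fast
  have "m < m + \<delta>" using \<open>0 < \<delta>\<close> by simp
  then have "util u (s, \<tau>) i < util u (r, \<sigma>) i" for i
    using rm u_B in_sel s\<tau> unfolding rent_monotone_def by blast
  then have "u i (s (\<mu> i)) (\<mu> i) = u i (s (\<tau> i)) (\<tau> i)" for i
    using selection_envy_free[OF sel u_B, of "(r, \<sigma>)"] selection_envy_free[OF sel u_B, of "(s, \<tau>)"]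
      in_sel s\<tau> qlu_small_increase_indifferent[OF u_def \<rho>_nonneg _ _ _ mwpm margin \<open>\<delta> \<le> \<epsilon>\<close>]
    by blast
  then show ?thesis
    using pareto_indifferent_rematch[OF sel pi u_B, of s \<tau> "m + \<delta>" \<mu>] s\<tau> min_weight_pm_matching(1)[OF mwpm]
    by blast
qed

theorem lemma6:
  fixes P :: "real set"
    and \<Psi> :: "('n::finite,'a::finite) profile \<Rightarrow> real \<Rightarrow> ('n,'a) alloc set"
    and v :: "'n \<Rightarrow> 'a \<Rightarrow> real" and b \<rho> :: "'n \<Rightarrow> real"
    and m :: real and r :: "'a \<Rightarrow> real" and \<sigma> \<mu> :: "'n \<Rightarrow> 'a"
  assumes card: "card (UNIV :: 'n set) = card (UNIV :: 'a set)"
    and P_fin: "finite P" and P_nonneg: "\<forall>p\<in>P. p \<ge> 0" and P_zero: "0 \<in> P"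
    and sel: "selection P \<Psi>"
    and esv: "ess_single_valued P \<Psi>"
    and rm: "rent_monotone P \<Psi>"
    and pi: "pareto_indifferent P \<Psi>"
    and b_nonneg: "\<forall>i. b i \<ge> 0" and \<rho>_P: "\<forall>i. \<rho> i \<in> P"
    and in_sel: "(r, \<sigma>) \<in> \<Psi> (qlu v b \<rho>) m"
    and mwpm: "min_weight_pm v b \<rho> r \<sigma> \<mu>"
  shows "\<exists>\<epsilon>>0. \<forall>\<delta>\<in>{0..\<epsilon>}. \<exists>r'. (r', \<mu>) \<in> \<Psi> (qlu v b \<rho>) (m + \<delta>)"
proof -
  define u where "u = qlu v b \<rho>"
  have u_B: "u \<in> profiles_B P" unfolding u_def using b_nonneg \<rho>_P by (rule qlu_in_profiles_B)
  have \<rho>_nonneg: "\<rho> i \<ge> 0" for i using P_nonneg \<rho>_P by blast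
  obtain \<epsilon> where "\<epsilon> > 0" and margin: "\<And>i a. r a < b i \<Longrightarrow> r a + \<epsilon> \<le> b i"
      "\<And>i a. u i (r a) a < u i (r (\<sigma> i)) (\<sigma> i) \<Longrightarrow>
        (1 + \<rho> i) * \<epsilon> \<le> u i (r (\<sigma> i)) (\<sigma> i) - u i (r a) a"
    using ex_rent_margin[where u = u and U = "\<lambda>i. u i (r (\<sigma> i)) (\<sigma> i)"
        and r = r and b = b and \<rho> = \<rho>] \<rho>_nonneg by blast
  have "\<exists>s. (s, \<mu>) \<in> \<Psi> u (m + \<delta>)" if "0 \<le> \<delta>" "\<delta> \<le> \<epsilon>" for \<delta>
  proof (cases "\<delta> = 0")
    case True
    have "(r, \<mu>) \<in> \<Psi> u m"
      using pareto_indifferent_rematch[OF sel pi u_B, of r \<sigma> m \<mu>] in_sel min_weight_pm_matching[OF mwpm]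
      unfolding u_def by blast
    with True show ?thesis by auto
  next
    case False
    with that show ?thesis
      using selection_small_increase_rematch[OF sel rm pi u_def u_B \<rho>_nonneg _ mwpm margin] in_sel
      unfolding u_def by simp
  qed
  then show ?thesis using \<open>\<epsilon> > 0\<close> unfolding u_def by auto
qed

end
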